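(* Let $G$ be a strongly connected signed digraph on $[n]$ with at least one arc and without positive cycles, and let $f$ be a Boolean network on $G$. For every $i\in[n]$ and every $x\in\{0,1\}^n$ there is a word $w$ over $[n]$ such that $f^w(x)_i\neq x_i$.
   Context: A signed digraph on $V$ is $(V,E)$ with $E\subseteq V\times V\times\{-1,1\}$ (arc from $j$ to $i$ of sign $s$; loops allowed). Cycles have no repeated vertices (a loop is a cycle); the sign of a cycle is the product of its arc signs. A Boolean network (BN) is a map $f:\{0,1\}^V\to\{0,1\}^V$; its signed interaction digraph has a positive (negative) arc from $j$ to $i$ iff for some $x$ with $x_j=0$, $f_i(x+e_j)-f_i(x)$ is positive (negative), $x+e_j$ denoting $x$ with component $j$ flipped. A BN on $G$ is one whose signed interaction digraph is $G$. $f^i(x)$ is $x$ with $x_i$ replaced by $f_i(x)$; for a word $w=i_1\cdots i_\ell$, $f^w=f^{i_\ell}\circ\cdots\circ f^{i_1}$. *)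

theory Defs
  imports Main
begin

text \<open>Vertices: a finite type 'v (standing for [n]).  Configurations: 'v \<Rightarrow> bool
  (True = 1, False = 0).  A signed arc (j, i, s) goes from j to i with sign s.\<close>

type_synonym 'v sdigraph = "('v \<times> 'v \<times> int) set"

definition signed_digraph :: "'v sdigraph \<Rightarrow> bool" where
  "signed_digraph E \<longleftrightarrow> (\<forall>(j, i, s) \<in> E. s \<in> {-1, 1})"

definition interaction_graph :: "(('v \<Rightarrow> bool) \<Rightarrow> ('v \<Rightarrow> bool)) \<Rightarrow> 'v sdigraph" where
  "interaction_graph f =
     {(j, i, s). (s = 1 \<and> (\<exists>x. \<not> x j \<and> \<not> f x i \<and> f (x(j := True)) i))
               \<or> (s = -1 \<and> (\<exists>x. \<not> x j \<and> f x i \<and> \<not> f (x(j := True)) i))}"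

definition arc_rel :: "'v sdigraph \<Rightarrow> ('v \<times> 'v) set" where
  "arc_rel E = {(j, i). \<exists>s. (j, i, s) \<in> E}"

definition strongly_connected :: "'v sdigraph \<Rightarrow> bool" where
  "strongly_connected E \<longleftrightarrow> (\<forall>u v. (u, v) \<in> (arc_rel E)\<^sup>*)"

definition is_cycle :: "'v sdigraph \<Rightarrow> ('v \<times> 'v \<times> int) list \<Rightarrow> bool" where
  "is_cycle E c \<longleftrightarrow> c \<noteq> [] \<and> set c \<subseteq> E
     \<and> (\<forall>t < length c. fst (snd (c ! t)) = fst (c ! ((t + 1) mod length c)))
     \<and> distinct (map fst c)"

definition cycle_sign :: "('v \<times> 'v \<times> int) list \<Rightarrow> int" where
  "cycle_sign c = prod_list (map (\<lambda>a. snd (snd a)) c)"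

definition no_positive_cycle :: "'v sdigraph \<Rightarrow> bool" where
  "no_positive_cycle E \<longleftrightarrow> \<not> (\<exists>c. is_cycle E c \<and> cycle_sign c = 1)"

definition upd_at :: "(('v \<Rightarrow> bool) \<Rightarrow> ('v \<Rightarrow> bool)) \<Rightarrow> 'v \<Rightarrow> ('v \<Rightarrow> bool) \<Rightarrow> ('v \<Rightarrow> bool)" where
  "upd_at f i x = x(i := f x i)"

fun upd_word :: "(('v \<Rightarrow> bool) \<Rightarrow> ('v \<Rightarrow> bool)) \<Rightarrow> 'v list \<Rightarrow> ('v \<Rightarrow> bool) \<Rightarrow> ('v \<Rightarrow> bool)" where
  "upd_word f [] x = x"
| "upd_word f (i # w) x = upd_word f w (upd_at f i x)"

end

theory Submission
  imports Defs
begin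

text \<open>An arc (u, v, s) is frustrated by x if s = 1 and x u \<noteq> x v, or s = -1 and x u = x v.
  If every vertex had an in-arc not frustrated by x, choosing one per vertex would close a cycle of
  such arcs, whose sign is the product of (-1)^(x u + x v) over its arcs, hence positive.  So without
  positive cycles every x has a vertex v all of whose in-arcs are frustrated, and since v has an
  in-arc, it is unstable: were f x v = x v, walk from x towards a point where f_v takes the other
  value, flipping one differing coordinate at a time; the first flip that changes f_v is along an
  in-arc of v that x does not frustrate.

  Now fix i and a spanning out-tree of G rooted at i, with ranks decreasing away from i.  While
  x i is stable, update a vertex v \<noteq> i with all in-arcs frustrated: this unfrustrates the tree
  arc into v and can only frustrate tree arcs into children of v, which have lower rank.  So the
  sum of N^rank over the vertices with a frustrated tree arc strictly decreases (N = number of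
  vertices), and eventually x i is updated to a new value.\<close>

fun frustrated :: "('v \<Rightarrow> bool) \<Rightarrow> 'v \<times> 'v \<times> int \<Rightarrow> bool" where
  "frustrated x (u, v, s) \<longleftrightarrow> (s = 1) \<noteq> (x u = x v)"

lemma interaction_graph_positiveI:
  "\<not> x k \<Longrightarrow> \<not> f x v \<Longrightarrow> f (x(k := True)) v \<Longrightarrow> (k, v, 1) \<in> interaction_graph f"
  unfolding interaction_graph_def by auto

lemma interaction_graph_negativeI:
  "\<not> x k \<Longrightarrow> f x v \<Longrightarrow> \<not> f (x(k := True)) v \<Longrightarrow> (k, v, -1) \<in> interaction_graph f"
  unfolding interaction_graph_def by auto

lemma interaction_graph_arc_of_flip:
  assumes "f (x(k := \<not> x k)) v \<noteq> f x v"
  shows "\<exists>s. (k, v, s) \<in> interaction_graph f \<and> (s = 1 \<longleftrightarrow> x k = f x v)"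
proof (cases "x k")
  case True
  then have "(x(k := False))(k := True) = x" and "x(k := \<not> x k) = x(k := False)"
    by (auto simp: fun_eq_iff)
  with True assms show ?thesis
    using interaction_graph_positiveI[of "x(k := False)" k f v] interaction_graph_negativeI[of "x(k := False)" k f v]
    by (cases "f x v") force+
next
  case False
  with assms show ?thesis
    using interaction_graph_positiveI[of x k f v] interaction_graph_negativeI[of x k f v]
    by (cases "f x v") force+
qed

lemma interaction_graph_arc_between:
  fixes f :: "('v::finite \<Rightarrow> bool) \<Rightarrow> ('v \<Rightarrow> bool)"
  assumes "f y v \<noteq> f z v"
  shows "\<exists>k s. y k \<noteq> z k \<and> (k, v, s) \<in> interaction_graph f \<and> (s = 1 \<longleftrightarrow> y k = f y v)"
  using assms
proof (induction "card {k. y k \<noteq> z k}" arbitrary: y rule: less_induct)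
  case (less y)
  from less.prems have "y \<noteq> z"
    by auto
  then obtain k where k: "y k \<noteq> z k"
    by auto
  show ?case
  proof (cases "f (y(k := z k)) v = f y v")
    case True
    have "card {j. (y(k := z k)) j \<noteq> z j} < card {j. y j \<noteq> z j}"
      by (rule psubset_card_mono) (use k in auto)
    with True less obtain j s where
      "(y(k := z k)) j \<noteq> z j" "(j, v, s) \<in> interaction_graph f" "s = 1 \<longleftrightarrow> (y(k := z k)) j = f y v"
      by fastforce
    then show ?thesis
      by (metis fun_upd_other fun_upd_same)
  next
    case False
    moreover from k have "z k = (\<not> y k)"
      by blast
    ultimately have "f (y(k := \<not> y k)) v \<noteq> f y v"
      by simp
    then have "\<exists>s. (k, v, s) \<in> interaction_graph f \<and> (s = 1 \<longleftrightarrow> y k = f y v)"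
      by (rule interaction_graph_arc_of_flip)
    with k show ?thesis
      by blast
  qed
qed

lemma unstable_if_in_arcs_frustrated:
  fixes f :: "('v::finite \<Rightarrow> bool) \<Rightarrow> ('v \<Rightarrow> bool)"
  assumes "(u, v, s) \<in> interaction_graph f"
    and "\<forall>u s. (u, v, s) \<in> interaction_graph f \<longrightarrow> frustrated y (u, v, s)"
  shows "f y v \<noteq> y v"
proof
  assume fixed: "f y v = y v"
  obtain x where "f x v \<noteq> f (x(u := True)) v"
    using assms(1) unfolding interaction_graph_def by auto
  then obtain z where "f y v \<noteq> f z v"
    by (cases "f y v = f x v") auto
  then obtain k s' where "(k, v, s') \<in> interaction_graph f" "s' = 1 \<longleftrightarrow> y k = f y v"
    using interaction_graph_arc_between[of f y v z] by blast
  with fixed assms(2) show False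
    by auto
qed

lemma in_arc_if_strongly_connected:
  assumes "strongly_connected E" and "E \<noteq> {}"
  shows "\<exists>u s. (u, v, s) \<in> E"
proof -
  obtain a b s where "(a, b, s) \<in> E"
    using assms(2) by auto
  have "(b, v) \<in> (arc_rel E)\<^sup>*"
    using assms(1) by (simp add: strongly_connected_def)
  then show ?thesis
    by (cases rule: rtranclE) (use \<open>(a, b, s) \<in> E\<close> in \<open>auto simp: arc_rel_def\<close>)
qed

lemma is_cycle_iff_rotate1:
  "is_cycle E c \<longleftrightarrow> c \<noteq> [] \<and> set c \<subseteq> E \<and> map (fst \<circ> snd) c = rotate1 (map fst c)
     \<and> distinct (map fst c)"
proof -
  have "rotate1 (map fst c) ! t = fst (c ! ((t + 1) mod length c))" if "t < length c" for t
  proof -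
    from that have "0 < length c"
      by linarith
    then have "Suc t mod length c < length c"
      by simp
    with that show ?thesis
      by (simp add: nth_rotate1)
  qed
  then have "(\<forall>t < length c. fst (snd (c ! t)) = fst (c ! ((t + 1) mod length c)))
    \<longleftrightarrow> map (fst \<circ> snd) c = rotate1 (map fst c)"
    by (auto simp: list_eq_iff_nth_eq)
  then show ?thesis
    unfolding is_cycle_def by blast
qed

lemma prod_list_rotate1: "prod_list (rotate1 xs) = (prod_list xs :: 'a::comm_monoid_mult)"
  by (cases xs) (simp_all add: mult.commute)

lemma prod_list_map_mult:
  "(\<Prod>x\<leftarrow>xs. g x * h x) = (\<Prod>x\<leftarrow>xs. g x) * (\<Prod>x\<leftarrow>xs. h x :: 'a::comm_monoid_mult)"
  by (induction xs) (simp_all add: mult_ac)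

lemma cycle_sign_eq_1_if_unfrustrated:
  fixes E :: "'v sdigraph" and x :: "'v \<Rightarrow> bool"
  assumes "signed_digraph E" and "is_cycle E c" and "\<forall>a \<in> set c. \<not> frustrated x a"
  shows "cycle_sign c = 1"
proof -
  define \<sigma> :: "'v \<Rightarrow> int" where "\<sigma> u = (if x u then 1 else -1)" for u
  have \<sigma>_square: "\<sigma> u * \<sigma> u = 1" for u
    by (simp add: \<sigma>_def)
  have "snd (snd a) = \<sigma> (fst a) * \<sigma> (fst (snd a))" if "a \<in> set c" for a
  proof -
    have "a \<in> E" "\<not> frustrated x a"
      using assms(2,3) that unfolding is_cycle_def by auto
    with assms(1) show ?thesis
      unfolding signed_digraph_def \<sigma>_def by (cases a) auto
  qed
  then have "cycle_sign c = (\<Prod>a\<leftarrow>c. \<sigma> (fst a) * \<sigma> (fst (snd a)))"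
    unfolding cycle_sign_def by (simp cong: map_cong)
  also have "\<dots> = (\<Prod>u\<leftarrow>map fst c. \<sigma> u) * (\<Prod>u\<leftarrow>map (fst \<circ> snd) c. \<sigma> u)"
    by (simp add: prod_list_map_mult comp_def)
  also have "map (fst \<circ> snd) c = rotate1 (map fst c)"
    using assms(2) by (simp add: is_cycle_iff_rotate1)
  also have "(\<Prod>u\<leftarrow>rotate1 (map fst c). \<sigma> u) = (\<Prod>u\<leftarrow>map fst c. \<sigma> u)"
    by (simp flip: rotate1_map add: prod_list_rotate1)
  also have "(\<Prod>u\<leftarrow>map fst c. \<sigma> u) * (\<Prod>u\<leftarrow>map fst c. \<sigma> u) = (\<Prod>u\<leftarrow>map fst c. \<sigma> u * \<sigma> u)"
    by (rule prod_list_map_mult[symmetric])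
  also have "\<dots> = 1"
    using \<sigma>_square by (simp add: comp_def map_replicate_const)
  finally show ?thesis .
qed

lemma periodic_orbit_exists:
  fixes q :: "'v::finite \<Rightarrow> 'v"
  shows "\<exists>os. os \<noteq> [] \<and> distinct os \<and> map q os = rotate1 os"
proof -
  define v where "v m = (q ^^ m) undefined" for m
  have "\<not> inj v"
    using inj_on_finite[of v UNIV UNIV] by auto
  then have "\<exists>b a. a < b \<and> v a = v b"
    unfolding inj_def by (metis linorder_neqE_nat)
  define b where "b = (LEAST b. \<exists>a<b. v a = v b)"
  have first_repeat: "b \<le> b'" if "a' < b'" "v a' = v b'" for a' b'
    unfolding b_def using that by (blast intro: Least_le)
  obtain a where ab: "a < b" "v a = v b"
    using LeastI_ex[OF \<open>\<exists>b a. a < b \<and> v a = v b\<close>] unfolding b_def by blast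
  have "inj_on v {..<b}"
    by (rule inj_onI) (metis first_repeat lessThan_iff linorder_neqE_nat not_le)
  then have "distinct (map v [a..<b])"
    by (auto simp: distinct_map intro: inj_on_subset)
  moreover have "map q (map v [a..<b]) = rotate1 (map v [a..<b])"
  proof -
    have "map q (map v [a..<b]) = map v (map Suc [a..<b])"
      by (simp add: v_def)
    also have "\<dots> = map v [Suc a..<b] @ [v a]"
      using ab by (simp add: map_Suc_upt)
    also have "\<dots> = rotate1 (map v [a..<b])"
      using ab by (simp add: upt_conv_Cons)
    finally show ?thesis .
  qed
  ultimately show ?thesis
    using ab by (intro exI[of _ "map v [a..<b]"]) simp
qed

lemma cycle_exists_if_in_arcs:
  fixes A :: "('v::finite) sdigraph"
  assumes "\<forall>v. \<exists>u s. (u, v, s) \<in> A"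
  shows "\<exists>c. is_cycle A c"
proof -
  obtain q sg where arc: "\<And>v. (q v, v, sg v) \<in> A"
    using assms by metis
  obtain os where os: "os \<noteq> []" "distinct os" "map q os = rotate1 os"
    using periodic_orbit_exists by blast
  \<comment> \<open>q v \<rightarrow> v is an arc, so the orbit read backwards is a cycle\<close>
  define c where "c = map (\<lambda>v. (q v, v, sg v)) (rev os)"
  have tails: "map fst c = rev (rotate1 os)"
    using os(3) by (simp add: c_def comp_def flip: rev_map)
  have "map (fst \<circ> snd) c = rotate1 (map fst c)"
    unfolding tails using os(1) by (cases os) (simp_all add: c_def comp_def)
  moreover have "c \<noteq> []" and "set c \<subseteq> A"
    using os(1) by (auto simp: c_def arc)
  moreover have "distinct (map fst c)"
    using os(2) by (simp add: tails)
  ultimately show ?thesis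
    unfolding is_cycle_iff_rotate1 by blast
qed

lemma exists_vertex_with_frustrated_in_arcs:
  fixes E :: "('v::finite) sdigraph"
  assumes "signed_digraph E" and "no_positive_cycle E"
  shows "\<exists>v. \<forall>u s. (u, v, s) \<in> E \<longrightarrow> frustrated x (u, v, s)"
proof (rule ccontr)
  let ?A = "{a \<in> E. \<not> frustrated x a}"
  assume "\<nexists>v. \<forall>u s. (u, v, s) \<in> E \<longrightarrow> frustrated x (u, v, s)"
  then obtain c where "is_cycle ?A c"
    using cycle_exists_if_in_arcs[of ?A] by blast
  then have "is_cycle E c" and "\<forall>a \<in> set c. \<not> frustrated x a"
    unfolding is_cycle_def by auto
  with assms show False
    using cycle_sign_eq_1_if_unfrustrated unfolding no_positive_cycle_def by blast
qed

lemma ranked_out_tree_exists: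
  fixes E :: "('v::finite) sdigraph"
  assumes "\<forall>v. (i, v) \<in> (arc_rel E)\<^sup>*"
  shows "\<exists>p s (r :: 'v \<Rightarrow> nat). \<forall>v. v \<noteq> i \<longrightarrow> (p v, v, s v) \<in> E \<and> r v < r (p v)"
proof -
  define d where "d v = (LEAST k. (i, v) \<in> arc_rel E ^^ k)" for v
  have "\<exists>u s. (u, v, s) \<in> E \<and> d u < d v" if "v \<noteq> i" for v
  proof -
    have "(i, v) \<in> arc_rel E ^^ d v"
      unfolding d_def using assms by (metis LeastI rtrancl_power)
    with that obtain m where m: "d v = Suc m" "(i, v) \<in> arc_rel E ^^ Suc m"
      by (cases "d v") auto
    then obtain u where "(i, u) \<in> arc_rel E ^^ m" "(u, v) \<in> arc_rel E"
      by auto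
    moreover from this(1) have "d u \<le> m"
      unfolding d_def by (rule Least_le)
    ultimately show ?thesis
      using m(1) by (auto simp: arc_rel_def)
  qed
  then obtain p s where tree: "\<forall>v. v \<noteq> i \<longrightarrow> (p v, v, s v) \<in> E \<and> d (p v) < d v"
    by metis
  define r where "r v = Max (range d) - d v" for v
  have "d v \<le> Max (range d)" for v
    by simp
  then have "\<forall>v. v \<noteq> i \<longrightarrow> (p v, v, s v) \<in> E \<and> r v < r (p v)"
    using tree unfolding r_def by (meson diff_less_mono2 order_less_le_trans)
  then show ?thesis
    by blast
qed

lemma power_rank_sum_decreasing:
  fixes r :: "'v::finite \<Rightarrow> nat"
  assumes "v \<in> B" and "B' \<subseteq> (B - {v}) \<union> {w. r w < r v}"
  shows "(\<Sum>w\<in>B'. card (UNIV :: 'v set) ^ r w) < (\<Sum>w\<in>B. card (UNIV :: 'v set) ^ r w)"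
proof -
  let ?N = "card (UNIV :: 'v set)" and ?C = "{w. r w < r v}"
  have "card ?C < ?N"
    by (rule psubset_card_mono) auto
  then have "0 < ?N"
    by simp
  have "?N * (\<Sum>w\<in>?C. ?N ^ r w) \<le> (\<Sum>w\<in>?C. ?N ^ r v)"
    unfolding sum_distrib_left
    by (rule sum_mono) (use \<open>0 < ?N\<close> in \<open>auto simp flip: power_Suc intro: power_increasing\<close>)
  also have "\<dots> < ?N * ?N ^ r v"
    using \<open>card ?C < ?N\<close> by simp
  finally have small: "(\<Sum>w\<in>?C. ?N ^ r w) < ?N ^ r v"
    by simp
  have "(\<Sum>w\<in>B'. ?N ^ r w) \<le> (\<Sum>w\<in>(B - {v}) \<union> ?C. ?N ^ r w)"
    using assms(2) by (intro sum_mono2) auto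
  also have "\<dots> \<le> (\<Sum>w\<in>B - {v}. ?N ^ r w) + (\<Sum>w\<in>?C. ?N ^ r w)"
    by (simp add: sum_Un_nat)
  also have "\<dots> < (\<Sum>w\<in>B - {v}. ?N ^ r w) + ?N ^ r v"
    using small by simp
  also have "\<dots> = (\<Sum>w\<in>B. ?N ^ r w)"
    using assms(1) by (simp add: sum.remove)
  finally show ?thesis .
qed

lemma frustrated_tree_arcs_after_flip:
  fixes r :: "'v \<Rightarrow> 'a::preorder"
  assumes "\<forall>w. w \<noteq> i \<longrightarrow> r w < r (p w)" and "v \<noteq> i" and "frustrated y (p v, v, s v)"
  shows "{w. w \<noteq> i \<and> frustrated (y(v := \<not> y v)) (p w, w, s w)}
           \<subseteq> ({w. w \<noteq> i \<and> frustrated y (p w, w, s w)} - {v}) \<union> {w. r w < r v}"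
proof
  fix w
  assume w: "w \<in> {w. w \<noteq> i \<and> frustrated (y(v := \<not> y v)) (p w, w, s w)}"
  show "w \<in> ({w. w \<noteq> i \<and> frustrated y (p w, w, s w)} - {v}) \<union> {w. r w < r v}"
  proof (cases "p w = v")
    case True
    with assms(1) w show ?thesis
      by auto
  next
    case False
    have "r v < r (p v)"
      using assms(1,2) by blast
    then have "p v \<noteq> v"
      by auto
    with False w assms(3) show ?thesis
      by (cases "w = v") auto
  qed
qed

lemma exists_word_changing_root:
  fixes f :: "('v::finite \<Rightarrow> bool) \<Rightarrow> ('v \<Rightarrow> bool)" and r :: "'v \<Rightarrow> nat"
  assumes in_arcs: "\<forall>v. \<exists>u s. (u, v, s) \<in> interaction_graph f"
    and frustrated_vertex: "\<forall>y. \<exists>v. \<forall>u s. (u, v, s) \<in> interaction_graph f \<longrightarrow> frustrated y (u, v, s)"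
    and tree: "\<forall>v. v \<noteq> i \<longrightarrow> (p v, v, s v) \<in> interaction_graph f \<and> r v < r (p v)"
  shows "\<exists>w. upd_word f w x i \<noteq> x i"
proof -
  define \<Phi> where
    "\<Phi> y = (\<Sum>w | w \<noteq> i \<and> frustrated y (p w, w, s w). card (UNIV :: 'v set) ^ r w)" for y
  show ?thesis
  proof (induction "\<Phi> x" arbitrary: x rule: less_induct)
    case less
    show ?case
    proof (cases "f x i = x i")
      case False
      then have "upd_word f [i] x i \<noteq> x i"
        by (simp add: upd_at_def)
      then show ?thesis
        by blast
    next
      case True
      obtain v where v: "\<forall>u s. (u, v, s) \<in> interaction_graph f \<longrightarrow> frustrated x (u, v, s)"
        using frustrated_vertex by blast
      moreover obtain u s' where "(u, v, s') \<in> interaction_graph f"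
        using in_arcs by blast
      ultimately have "f x v \<noteq> x v"
        by (rule unstable_if_in_arcs_frustrated[rotated])
      with True have "v \<noteq> i" and update: "upd_at f v x = x(v := \<not> x v)"
        by (auto simp: upd_at_def)
      have "\<Phi> (x(v := \<not> x v)) < \<Phi> x"
        unfolding \<Phi>_def
        by (rule power_rank_sum_decreasing[OF _ frustrated_tree_arcs_after_flip])
          (use tree v \<open>v \<noteq> i\<close> in auto)
      then obtain w where "upd_word f w (x(v := \<not> x v)) i \<noteq> (x(v := \<not> x v)) i"
        using less by blast
      with update \<open>v \<noteq> i\<close> have "upd_word f (v # w) x i \<noteq> x i"
        by simp
      then show ?thesis
        by blast
    qed
  qed
qed

theorem lemma1:
  fixes G :: "('v::finite) sdigraph"
    and f :: "('v \<Rightarrow> bool) \<Rightarrow> ('v \<Rightarrow> bool)"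
  assumes "signed_digraph G"
    and "strongly_connected G"
    and "G \<noteq> {}"
    and "no_positive_cycle G"
    and "interaction_graph f = G"
  shows "\<forall>i x. \<exists>w. upd_word f w x i \<noteq> x i"
proof (intro allI)
  fix i :: 'v and x :: "'v \<Rightarrow> bool"
  have "\<forall>v. \<exists>u s. (u, v, s) \<in> G"
    using in_arc_if_strongly_connected[OF assms(2,3)] by blast
  moreover have "\<forall>y. \<exists>v. \<forall>u s. (u, v, s) \<in> G \<longrightarrow> frustrated y (u, v, s)"
    using exists_vertex_with_frustrated_in_arcs[OF assms(1,4)] by blast
  moreover have "\<forall>v. (i, v) \<in> (arc_rel G)\<^sup>*"
    using assms(2) by (simp add: strongly_connected_def)
  then obtain p s and r :: "'v \<Rightarrow> nat" where "\<forall>v. v \<noteq> i \<longrightarrow> (p v, v, s v) \<in> G \<and> r v < r (p v)"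
    using ranked_out_tree_exists by blast
  ultimately show "\<exists>w. upd_word f w x i \<noteq> x i"
    by (rule exists_word_changing_root[where f = f, unfolded assms(5)])
qed

end
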